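(* Let $\Delta,\bar\Delta\in\mathbb{C}^*$ and let $h(\partial,\lambda)=\sum_{i=0}^m a_i\partial^{m-i}\lambda^i\in\mathbb{C}[\partial,\lambda]$ be a nonzero homogeneous polynomial of degree $m$ satisfying $$\big(\tfrac12\lambda-\mu\big)h(\partial,\lambda+\mu)=(\partial+\bar\Delta\lambda)h(\partial+\lambda,\mu)-(\partial+\mu+\Delta\lambda)h(\partial,\mu).$$ Then $a_0\neq0$, $m\in\{0,1,2\}$, and exactly one of the following holds: (i) $\Delta-\bar\Delta=-\tfrac12$ and $h(\partial,\lambda)=a_0$; (ii) $\Delta-\bar\Delta=\tfrac12$ and $h(\partial,\lambda)=a_0(\partial+2\bar\Delta\lambda)$; (iii) $(\Delta,\bar\Delta)=(1,-\tfrac12)$ and $h(\partial,\lambda)=a_0(\partial^2-\lambda^2)$. *)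

theory Defs
  imports Complex_Main
begin

definition hpoly :: "(nat \<Rightarrow> complex) \<Rightarrow> nat \<Rightarrow> complex \<Rightarrow> complex \<Rightarrow> complex" where
  "hpoly a m d l = (\<Sum>i=0..m. a i * d ^ (m - i) * l ^ i)"

end

theory Submission
  imports Defs "HOL-Computational_Algebra.Polynomial"
begin

text \<open>Putting u = 0 in the equation gives
  l h(d,l) = 2 a_0 ((d + Db l)(d + l)^m - (d + D l) d^m),
  so h is determined by a_0, D, Db and m, and in particular a_0 \<noteq> 0. Comparing coefficients
  in t in the specialisations (d,l,u) = (1,t,0), (0,1,t) and (1,t,-t) of the equation, with h
  replaced by this closed form, gives D - Db = m - 1/2 together with a quadratic and a quartic
  relation between Db and m, which force m \<le> 2. Since D - Db = m - 1/2, each of the three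
  cases corresponds to exactly one value of m.\<close>

lemma coeff_one_linear_power:
  "coeff ([:1, b:] ^ n) i = of_nat (n choose i) * (b :: 'a :: comm_semiring_1) ^ i"
proof (cases "i \<le> n")
  case True
  then show ?thesis using coeff_linear_poly_power[of i n 1 b] by simp
next
  case False
  have "degree ([:1, b:] ^ n) \<le> degree [:1, b:] * n" by (rule degree_power_le)
  also have "\<dots> \<le> n" by simp
  finally show ?thesis using False by (simp add: coeff_eq_0 binomial_eq_0)
qed

lemma of_nat_choose_2:
  "of_nat (n choose 2) = of_nat n * (of_nat n - 1) / (2 :: 'a :: field_char_0)"
  by (simp add: binomial_gbinomial gbinomial_pochhammer' pochhammer_Suc numeral_eq_Suc)

lemma of_nat_choose_3:
  "of_nat (n choose 3) = of_nat n * (of_nat n - 1) * (of_nat n - 2) / (6 :: 'a :: field_char_0)"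
  by (simp add: binomial_gbinomial gbinomial_pochhammer' pochhammer_Suc numeral_eq_Suc)

lemma of_nat_choose_4:
  "of_nat (n choose 4) =
    of_nat n * (of_nat n - 1) * (of_nat n - 2) * (of_nat n - 3) / (24 :: 'a :: field_char_0)"
  by (simp add: binomial_gbinomial gbinomial_pochhammer' pochhammer_Suc numeral_eq_Suc)

lemma hpoly_zero_right: "hpoly a m d 0 = a 0 * d ^ m"
proof -
  have "hpoly a m d 0 = (\<Sum>i=0..m. if i = 0 then a 0 * d ^ m else 0)"
    unfolding hpoly_def by (rule sum.cong) auto
  then show ?thesis by simp
qed

lemma hpoly_zero_left: "hpoly a m 0 l = a m * l ^ m"
proof -
  have "hpoly a m 0 l = (\<Sum>i=0..m. if i = m then a m * l ^ m else 0)"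
    unfolding hpoly_def by (rule sum.cong) auto
  then show ?thesis by simp
qed

definition hpoly_dehom :: "(nat \<Rightarrow> complex) \<Rightarrow> nat \<Rightarrow> complex poly" where
  "hpoly_dehom a m = (\<Sum>i\<le>m. monom (a i) i)"

lemma poly_hpoly_dehom: "poly (hpoly_dehom a m) l = hpoly a m 1 l"
  unfolding hpoly_def hpoly_dehom_def by (simp add: poly_sum poly_monom atLeast0AtMost)

lemma coeff_hpoly_dehom: "i \<le> m \<Longrightarrow> coeff (hpoly_dehom a m) i = a i"
  unfolding hpoly_dehom_def by (simp add: coeff_sum)

locale hpoly_solution =
  fixes D Db :: complex and a :: "nat \<Rightarrow> complex" and m :: nat
  assumes Db_nonzero: "Db \<noteq> 0"
    and coeffs_nonzero: "\<exists>i\<le>m. a i \<noteq> 0"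
    and eq: "\<And>d l u. (l / 2 - u) * hpoly a m d (l + u)
              = (d + Db * l) * hpoly a m (d + l) u - (d + u + D * l) * hpoly a m d u"
begin

lemma closed_form:
  "l * hpoly a m d l = 2 * a 0 * ((d + Db * l) * (d + l) ^ m - (d + D * l) * d ^ m)"
proof -
  have "l / 2 * hpoly a m d l = (d + Db * l) * hpoly a m (d + l) 0 - (d + D * l) * hpoly a m d 0"
    using eq[where u=0] by simp
  then show ?thesis by (simp add: hpoly_zero_right field_simps)
qed

lemma closed_form_dehom:
  "[:0, 1:] * hpoly_dehom a m = smult (2 * a 0) ([:1, Db:] * [:1, 1:] ^ m - [:1, D:])"
  by (intro poly_eq_poly_eq_iff[THEN iffD1] ext)
    (simp add: poly_hpoly_dehom closed_form[where d=1] algebra_simps)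

lemma a0_nonzero: "a 0 \<noteq> 0"
proof
  assume "a 0 = 0"
  then have "hpoly_dehom a m = 0" using closed_form_dehom by simp
  then show False using coeffs_nonzero coeff_hpoly_dehom[of _ m a] by auto
qed

lemma D_minus_Db: "D - Db = of_nat m - 1/2"
proof -
  have "a 0 = 2 * a 0 * (of_nat m + Db - D)"
    using arg_cong[OF closed_form_dehom, of "\<lambda>p. coeff p 1"] coeff_hpoly_dehom[of 0 m a]
    by (simp add: coeff_mult coeff_one_linear_power atMost_Suc algebra_simps)
  then have "2 * (of_nat m + Db - D) = 1" using a0_nonzero by simp
  then show ?thesis by (simp add: field_simps)
qed

lemma hpoly_zero_left_eq:
  assumes "m \<ge> 1"
  shows "hpoly a m 0 l = 2 * a 0 * Db * l ^ m"
proof -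
  have "a m = 2 * a 0 * Db"
    using closed_form[where d=0 and l=1] assms by (simp add: hpoly_zero_left)
  then show ?thesis by (simp add: hpoly_zero_left)
qed

lemma quadratic_relation:
  assumes "m \<ge> 2"
  shows "of_nat m / 2 - 1 = of_nat (m choose 2) + Db * of_nat m"
proof -
  have "t * (1/2 - t) * (1 + t) ^ m
        = (1 + Db * t) * (1 + t) ^ m - (1 + D * t) - (t + D) * t ^ (m + 1)" for t
  proof -
    have "t * ((1/2 - t) * hpoly a m 0 (1 + t))
          = Db * (t * hpoly a m 1 t) - (t + D) * t * hpoly a m 0 t"
      using arg_cong[OF eq[where d=0 and l=1 and u=t], of "(*) t"] by (simp add: algebra_simps)
    then have "2 * a 0 * Db * (t * (1/2 - t) * (1 + t) ^ m)
        = 2 * a 0 * Db * ((1 + Db * t) * (1 + t) ^ m - (1 + D * t) - (t + D) * t ^ (m + 1))"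
      using closed_form[where d=1 and l=t] assms by (simp add: hpoly_zero_left_eq algebra_simps)
    then show ?thesis using a0_nonzero Db_nonzero by simp
  qed
  then have "[:0, 1/2, -1:] * [:1, 1:] ^ m
      = [:1, Db:] * [:1, 1:] ^ m - [:1, D:] - [:D, 1:] * monom 1 (m + 1)"
    by (intro poly_eq_poly_eq_iff[THEN iffD1] ext) (simp add: poly_monom algebra_simps)
  from arg_cong[OF this, of "\<lambda>p. coeff p 2"] show ?thesis
    using assms
    by (simp add: coeff_mult coeff_one_linear_power numeral_eq_Suc atMost_Suc algebra_simps)
qed

lemma quartic_relation:
  "of_nat m * (of_nat m - 1) * (of_nat m - 1 + 2 * Db) * (of_nat m - 2 + 2 * Db) = 0"
proof -
  have "- (3/4) * t^2
      = (1 + Db * t) * ((1 + t - Db * t) - (1 + t - D * t) * (1 + t) ^ m)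
        - (1 - t + D * t) * ((1 - Db * t) * (1 - t) ^ m - (1 - D * t))" for t
  proof -
    have shifted: "- t * hpoly a m (1 + t) (- t)
        = 2 * a 0 * ((1 + t - Db * t) - (1 + t - D * t) * (1 + t) ^ m)"
      using closed_form[where d="1 + t" and l="- t"] by (simp add: algebra_simps)
    have unshifted:
      "- t * hpoly a m 1 (- t) = 2 * a 0 * ((1 - Db * t) * (1 - t) ^ m - (1 - D * t))"
      using closed_form[where d=1 and l="- t"] by (simp add: algebra_simps)
    have "- t * (3 * t / 2 * hpoly a m 1 0)
        = (1 + Db * t) * (- t * hpoly a m (1 + t) (- t))
          - (1 - t + D * t) * (- t * hpoly a m 1 (- t))"
      using arg_cong[OF eq[where d=1 and l=t and u="- t"], of "(*) (- t)"]
      by (simp add: algebra_simps)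
    then have "2 * a 0 * (- (3/4) * t^2)
        = 2 * a 0 * ((1 + Db * t) * ((1 + t - Db * t) - (1 + t - D * t) * (1 + t) ^ m)
          - (1 - t + D * t) * ((1 - Db * t) * (1 - t) ^ m - (1 - D * t)))"
      unfolding shifted unshifted hpoly_zero_right by (simp add: algebra_simps power2_eq_square)
    then show ?thesis using a0_nonzero by (simp only: mult_cancel_left mult_eq_0_iff) simp
  qed
  then have "smult (- 3/4) [:0, 0, 1:]
      = [:1, Db:] * ([:1, 1 - Db:] - [:1, 1 - D:] * [:1, 1:] ^ m)
        - [:1, D - 1:] * ([:1, - Db:] * [:1, - 1:] ^ m - [:1, - D:])"
    by (intro poly_eq_poly_eq_iff[THEN iffD1] ext) (simp add: algebra_simps power2_eq_square)
  from arg_cong[OF this, of "\<lambda>p. coeff p 4"]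
  have "0 = Db * (- of_nat (m choose 3) - (1 - D) * of_nat (m choose 2))
      - Db * of_nat (m choose 3) + (D - 1) * (of_nat (m choose 3) + Db * of_nat (m choose 2))
      - (1 - D) * of_nat (m choose 3) - 2 * of_nat (m choose 4)"
    by (simp add: coeff_mult coeff_one_linear_power numeral_eq_Suc atMost_Suc)
      (simp add: algebra_simps)
  moreover have "D = Db + of_nat m - 1/2" using D_minus_Db by (simp add: algebra_simps)
  ultimately show ?thesis
    by (simp add: of_nat_choose_2 of_nat_choose_3 of_nat_choose_4 field_simps) algebra
qed

lemma degree_le_two: "m \<le> 2"
proof (rule ccontr)
  assume "\<not> m \<le> 2"
  define M :: complex where "M = of_nat m"
  have "2 * (M - 2) = 2 * (M * (M - 1) + 2 * Db * M)"
    using quadratic_relation \<open>\<not> m \<le> 2\<close>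
    unfolding of_nat_choose_2 M_def[symmetric] by (simp add: field_simps)
  then have "M - 2 = M * (M - 1) + 2 * Db * M" by (metis mult_cancel_left zero_neq_numeral)
  then have third_factor: "M * (M - 1 + 2 * Db) = M - 2"
    and fourth_factor: "M * (M - 2 + 2 * Db) = - 2"
    by (simp_all add: algebra_simps)
  have "- 2 * (M * (M - 1) * (M - 2))
      = M * (M - 1) * (M * (M - 1 + 2 * Db)) * (M * (M - 2 + 2 * Db))"
    unfolding third_factor fourth_factor by simp
  also have "\<dots> = M^2 * (M * (M - 1) * (M - 1 + 2 * Db) * (M - 2 + 2 * Db))"
    by (simp add: algebra_simps power2_eq_square)
  also have "\<dots> = 0" using quartic_relation unfolding M_def by simp
  finally have "M = 0 \<or> M = 1 \<or> M = 2" by simp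
  then have "m = 0 \<or> m = 1 \<or> m = 2"
    unfolding M_def by (metis of_nat_eq_iff of_nat_numeral of_nat_0 of_nat_1)
  with \<open>\<not> m \<le> 2\<close> show False by auto
qed

lemma hpoly_degree_zero: "m = 0 \<Longrightarrow> hpoly a m d l = a 0"
  by (simp add: hpoly_def)

lemma hpoly_degree_one: "m = 1 \<Longrightarrow> hpoly a m d l = a 0 * (d + 2 * Db * l)"
  using hpoly_zero_left_eq[of 1] by (simp add: hpoly_def hpoly_zero_left algebra_simps)

lemma degree_two_weights:
  assumes "m = 2"
  shows "D = 1" and "Db = - 1/2"
proof -
  have "2 * Db = - 1" using quadratic_relation assms by (simp add: field_simps add_eq_0_iff)
  then show "Db = - 1/2" by (simp add: field_simps)
  then show "D = 1" using D_minus_Db assms by (simp add: field_simps)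
qed

lemma hpoly_degree_two:
  assumes "m = 2"
  shows "hpoly a m d l = a 0 * (d\<^sup>2 - l\<^sup>2)"
proof -
  have a2: "a 2 = - a 0"
    using hpoly_zero_left_eq[of 1] degree_two_weights assms by (simp add: hpoly_zero_left)
  have "a 0 + a 1 + a 2 = 0"
    using closed_form[where d=1 and l=1] degree_two_weights assms
    by (simp add: hpoly_def numeral_eq_Suc)
  then have "a 1 = 0" using a2 by simp
  then show ?thesis using assms a2
    by (simp add: hpoly_def numeral_eq_Suc algebra_simps power2_eq_square)
qed

lemma degree_zero_iff: "D - Db = - 1/2 \<longleftrightarrow> m = 0"
  unfolding D_minus_Db by (simp add: eq_diff_eq)

lemma degree_one_iff: "D - Db = 1/2 \<longleftrightarrow> m = 1"
  unfolding D_minus_Db by (simp add: eq_diff_eq)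

lemma degree_two_iff: "(D, Db) = (1, - 1/2) \<longleftrightarrow> m = 2"
proof
  assume "(D, Db) = (1, - 1/2)"
  then have "of_nat m = (2 :: complex)" using D_minus_Db by (simp add: field_simps)
  then show "m = 2" by (metis of_nat_eq_iff of_nat_numeral)
qed (use degree_two_weights in simp)

end

theorem lemma3p6:
  fixes D Db :: complex and a :: "nat \<Rightarrow> complex" and m :: nat
  assumes "D \<noteq> 0" and "Db \<noteq> 0"
    and nonzero: "\<exists>i\<le>m. a i \<noteq> 0"
    and eq: "\<And>d l u. (l / 2 - u) * hpoly a m d (l + u)
              = (d + Db * l) * hpoly a m (d + l) u - (d + u + D * l) * hpoly a m d u"
  shows "a 0 \<noteq> 0 \<and> m \<in> {0, 1, 2} \<and>
    (let P1 = (D - Db = - 1/2 \<and> (\<forall>d l. hpoly a m d l = a 0));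
         P2 = (D - Db = 1/2 \<and> (\<forall>d l. hpoly a m d l = a 0 * (d + 2 * Db * l)));
         P3 = ((D, Db) = (1, - 1/2) \<and> (\<forall>d l. hpoly a m d l = a 0 * (d\<^sup>2 - l\<^sup>2)))
     in (P1 \<and> \<not> P2 \<and> \<not> P3) \<or> (\<not> P1 \<and> P2 \<and> \<not> P3) \<or> (\<not> P1 \<and> \<not> P2 \<and> P3))"
proof -
  interpret hpoly_solution D Db a m
    using assms(2-4) by unfold_locales
  have "m \<in> {0, 1, 2}" using degree_le_two by auto
  then show ?thesis
    unfolding Let_def degree_zero_iff degree_one_iff degree_two_iff
    using a0_nonzero hpoly_degree_zero hpoly_degree_one hpoly_degree_two by auto
qed

end
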